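(* Consider the following repeated procedure with threshold $\omega>0$. Start from some $\lambda_1 \in \mathbb{R}^m_+$. At each round $t=1,2,\dots$: (1) let $\pi_t \in \Pi$ be a deterministic policy that is a best response, i.e. $\pi_t \in \arg\max_{\pi \in \mathrm{Conv}(\Pi)} L(\pi,\lambda_t)$; (2) let $\hat\pi_t$ be the mixed policy putting weight $1/t$ on each of $\pi_1,\dots,\pi_t$ and $\hat\lambda_t = \frac1t\sum_{t'=1}^t \lambda_{t'}$; (3) compute exactly $L_{\max} = \max_{\pi} L(\pi, \hat\lambda_t)$ (the value at a best response to $\hat\lambda_t$) and $L_{\min} = \min_{\lambda \in \mathbb{R}^m_+} L(\hat\pi_t, \lambda)$; (4) if $L_{\max} - L_{\min} < \omega$, return $\hat\pi_t$; (5) otherwise let $\lambda_{t+1}$ be produced by an online algorithm from $\pi_1,\dots,\pi_t$, where this online algorithm is no-regret with respect to the losses $-L(\pi_t,\cdot)$: for every $T$, $\sum_{t=1}^T (-L)(\pi_t,\lambda_t) \ge \max_{\lambda \in \mathbb{R}^m_+} \sum_{t=1}^T (-L)(\pi_t,\lambda) - R(T)$ with $R(T) = o(T)$. Then this procedure is guaranteed to converge, i.e. it terminates after finitely many rounds; its convergence rate is governed by the regret $R(T)$ of the online algorithm (the duality gap $L_{\max}-L_{\min}$ at round $T$ is at most $R(T)/T$).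
   Context: Setting: finite $\mathcal{S},\mathcal{A}$, $\gamma\in[0,1)$, initial distribution $\mu$, an $(s,a)$-rectangular uncertainty set $\mathcal{P} = \otimes_{(s,a)}\mathcal{P}_{s,a}$ with $\mathcal{P}_{s,a} = \{P \in \Delta(\mathcal{S}): D(P,P^o_{s,a}) \le \beta_{s,a}\}$ around a nominal kernel $P^o$ (minima over these sets taken to be attained), reward $r:\mathcal{S}\times\mathcal{A}\to[0,\bar R]$, constraint rewards $g_i:\mathcal{S}\times\mathcal{A}\to[0,\tau_i]$ ($i=1,\dots,m$) with thresholds $\tau$. $\Pi$ is the class of deterministic stationary policies. For a reward $u$ and $\pi\in\Pi$, $V^\pi_u(s) = \min_{\mathcal{K}\in\otimes_{t\ge0}\mathcal{P}}\mathbb{E}_{\mathcal{K}}[\sum_{t\ge0}\gamma^t u(s_t,a_t)\mid s_0=s,\pi]$ (worst case over sequences of kernels from $\mathcal{P}$, one per time step), $V^\pi_u(\mu)=\langle V^\pi_u,\mu\rangle$, $V^\pi_g = (V^\pi_{g_1},\dots,V^\pi_{g_m})^\top$. $\mathrm{Conv}(\Pi)$ is the set of mixed policies (categorical distributions over finitely many deterministic policies, one sampled per episode), with robust value the corresponding weighted average of robust values. The Lagrangian is $L(\pi,\lambda) = V^\pi_r(\mu) - \lambda^\top(V^\pi_g(\mu)-\tau)$ for $\pi\in\mathrm{Conv}(\Pi)$, $\lambda\in\mathbb{R}^m_+$; it is linear in the mixture weights and in $\lambda$. *)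

theory Defs
  imports "HOL-Analysis.Analysis" "HOL-Library.Landau_Symbols"
begin

text \<open>Transition kernels are functions
  P s a s' (probability of moving to s' from s under action a).\<close>

definition prob_vec :: "('s::finite \<Rightarrow> real) \<Rightarrow> bool" where
  "prob_vec p \<longleftrightarrow> (\<forall>s. 0 \<le> p s) \<and> sum p UNIV = 1"

definition unc_set ::
  "(('s::finite \<Rightarrow> real) \<Rightarrow> ('s \<Rightarrow> real) \<Rightarrow> real) \<Rightarrow> ('s \<Rightarrow> 'a \<Rightarrow> real)
   \<Rightarrow> ('s \<Rightarrow> 'a \<Rightarrow> 's \<Rightarrow> real) \<Rightarrow> ('s \<Rightarrow> 'a \<Rightarrow> 's \<Rightarrow> real) set" where
  "unc_set D \<beta> P0 = {P. \<forall>s a. prob_vec (P s a) \<and> D (P s a) (P0 s a) \<le> \<beta> s a}"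

fun state_dist ::
  "(nat \<Rightarrow> 's::finite \<Rightarrow> 'a \<Rightarrow> 's \<Rightarrow> real) \<Rightarrow> ('s \<Rightarrow> 'a) \<Rightarrow> 's \<Rightarrow> nat \<Rightarrow> 's \<Rightarrow> real" where
  "state_dist K pol s0 0 = (\<lambda>s. if s = s0 then 1 else 0)"
| "state_dist K pol s0 (Suc t) = (\<lambda>s'. \<Sum>s\<in>UNIV. state_dist K pol s0 t s * K t s (pol s) s')"

definition disc_return ::
  "real \<Rightarrow> (nat \<Rightarrow> 's::finite \<Rightarrow> 'a \<Rightarrow> 's \<Rightarrow> real) \<Rightarrow> ('s \<Rightarrow> 'a) \<Rightarrow> ('s \<Rightarrow> 'a \<Rightarrow> real) \<Rightarrow> 's \<Rightarrow> real" where
  "disc_return \<gamma> K pol u s0 =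
     (\<Sum>t. \<gamma> ^ t * (\<Sum>s\<in>UNIV. state_dist K pol s0 t s * u s (pol s)))"

definition robust_value ::
  "real \<Rightarrow> (('s::finite \<Rightarrow> real) \<Rightarrow> ('s \<Rightarrow> real) \<Rightarrow> real) \<Rightarrow> ('s \<Rightarrow> 'a \<Rightarrow> real)
   \<Rightarrow> ('s \<Rightarrow> 'a \<Rightarrow> 's \<Rightarrow> real) \<Rightarrow> ('s \<Rightarrow> 'a \<Rightarrow> real) \<Rightarrow> ('s \<Rightarrow> 'a) \<Rightarrow> 's \<Rightarrow> real" where
  "robust_value \<gamma> D \<beta> P0 u pol s0 =
     Inf {disc_return \<gamma> K pol u s0 | K. \<forall>t. K t \<in> unc_set D \<beta> P0}"

definition robust_value_init ::
  "real \<Rightarrow> (('s::finite \<Rightarrow> real) \<Rightarrow> ('s \<Rightarrow> real) \<Rightarrow> real) \<Rightarrow> ('s \<Rightarrow> 'a \<Rightarrow> real)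
   \<Rightarrow> ('s \<Rightarrow> 'a \<Rightarrow> 's \<Rightarrow> real) \<Rightarrow> ('s \<Rightarrow> real) \<Rightarrow> ('s \<Rightarrow> 'a \<Rightarrow> real) \<Rightarrow> ('s \<Rightarrow> 'a) \<Rightarrow> real" where
  "robust_value_init \<gamma> D \<beta> P0 \<mu> u pol = (\<Sum>s\<in>UNIV. robust_value \<gamma> D \<beta> P0 u pol s * \<mu> s)"

text \<open>Mixed policies: categorical distributions over the (finite) set of deterministic policies.\<close>
definition mixed_policy :: "(('s::finite \<Rightarrow> 'a::finite) \<Rightarrow> real) \<Rightarrow> bool" where
  "mixed_policy w \<longleftrightarrow> (\<forall>p. 0 \<le> w p) \<and> sum w UNIV = 1"

definition det_mix :: "('s \<Rightarrow> 'a) \<Rightarrow> (('s \<Rightarrow> 'a) \<Rightarrow> real)" where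
  "det_mix p = (\<lambda>q. if q = p then 1 else 0)"

definition mixed_value ::
  "real \<Rightarrow> (('s::finite \<Rightarrow> real) \<Rightarrow> ('s \<Rightarrow> real) \<Rightarrow> real) \<Rightarrow> ('s \<Rightarrow> 'a::finite \<Rightarrow> real)
   \<Rightarrow> ('s \<Rightarrow> 'a \<Rightarrow> 's \<Rightarrow> real) \<Rightarrow> ('s \<Rightarrow> real) \<Rightarrow> ('s \<Rightarrow> 'a \<Rightarrow> real) \<Rightarrow> (('s \<Rightarrow> 'a) \<Rightarrow> real) \<Rightarrow> real" where
  "mixed_value \<gamma> D \<beta> P0 \<mu> u w = (\<Sum>p\<in>UNIV. w p * robust_value_init \<gamma> D \<beta> P0 \<mu> u p)"

definition lagrangian ::
  "real \<Rightarrow> (('s::finite \<Rightarrow> real) \<Rightarrow> ('s \<Rightarrow> real) \<Rightarrow> real) \<Rightarrow> ('s \<Rightarrow> 'a::finite \<Rightarrow> real)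
   \<Rightarrow> ('s \<Rightarrow> 'a \<Rightarrow> 's \<Rightarrow> real) \<Rightarrow> ('s \<Rightarrow> real) \<Rightarrow> ('s \<Rightarrow> 'a \<Rightarrow> real)
   \<Rightarrow> ('i::finite \<Rightarrow> 's \<Rightarrow> 'a \<Rightarrow> real) \<Rightarrow> ('i \<Rightarrow> real)
   \<Rightarrow> (('s \<Rightarrow> 'a) \<Rightarrow> real) \<Rightarrow> ('i \<Rightarrow> real) \<Rightarrow> real" where
  "lagrangian \<gamma> D \<beta> P0 \<mu> r g \<tau> w lam =
     mixed_value \<gamma> D \<beta> P0 \<mu> r w
     - (\<Sum>i\<in>UNIV. lam i * (mixed_value \<gamma> D \<beta> P0 \<mu> (g i) w - \<tau> i))"

end

theory Submission
  imports Defs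
begin

text \<open>This is the classical no-regret argument for zero-sum games. The Lagrangian is affine in the
  mixture weights and in the multipliers, so at the averaged pair the best-response value
  against \<open>hat_lam T\<close> is bounded by the average of the realised payoffs \<open>L \<pi>\<^sub>t \<lambda>\<^sub>t\<close> (each \<open>\<pi>\<^sub>t\<close> is a
  best response), while the worst multiplier against \<open>hat_pi T\<close> loses at most \<open>R T\<close> on that
  average (no regret). Hence the duality gap is at most \<open>R T / T\<close>, which tends to \<open>0\<close>.\<close>

lemma mixed_value_det_mix:
  "mixed_value \<gamma> D \<beta> P0 \<mu> u (det_mix p) = robust_value_init \<gamma> D \<beta> P0 \<mu> u p"
  unfolding mixed_value_def det_mix_def by (simp add: of_bool_def[symmetric])

lemma lagrangian_convex_combination:
  assumes "sum w UNIV = 1"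
  shows "lagrangian \<gamma> D \<beta> P0 \<mu> r g \<tau> w l
    = (\<Sum>p\<in>UNIV. w p * lagrangian \<gamma> D \<beta> P0 \<mu> r g \<tau> (det_mix p) l)"
proof -
  define V where "V = robust_value_init \<gamma> D \<beta> P0 \<mu>"
  have constraint_term: "(\<Sum>p\<in>UNIV. w p * (l i * (V (g i) p - \<tau> i)))
      = l i * ((\<Sum>p\<in>UNIV. w p * V (g i) p) - \<tau> i)" for i
  proof -
    have "(\<Sum>p\<in>UNIV. w p * (l i * (V (g i) p - \<tau> i)))
        = l i * (\<Sum>p\<in>UNIV. w p * V (g i) p) - l i * \<tau> i * (\<Sum>p\<in>UNIV. w p)"
      by (simp add: algebra_simps sum_subtractf sum_distrib_left)
    then show ?thesis
      using assms by (simp add: algebra_simps)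
  qed
  have "(\<Sum>p\<in>UNIV. w p * lagrangian \<gamma> D \<beta> P0 \<mu> r g \<tau> (det_mix p) l)
      = (\<Sum>p\<in>UNIV. w p * V r p) - (\<Sum>p\<in>UNIV. \<Sum>i\<in>UNIV. w p * (l i * (V (g i) p - \<tau> i)))"
    unfolding lagrangian_def mixed_value_det_mix V_def
    by (simp add: right_diff_distrib sum_distrib_left sum_subtractf)
  also have "\<dots> = (\<Sum>p\<in>UNIV. w p * V r p) - (\<Sum>i\<in>UNIV. \<Sum>p\<in>UNIV. w p * (l i * (V (g i) p - \<tau> i)))"
    by (subst sum.swap) (rule refl)
  finally show ?thesis
    unfolding constraint_term by (simp add: lagrangian_def mixed_value_def V_def)
qed

lemma lagrangian_average_multipliers:
  assumes "finite S" "S \<noteq> {}"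
  shows "lagrangian \<gamma> D \<beta> P0 \<mu> r g \<tau> w (\<lambda>i. (\<Sum>t\<in>S. l t i) / real (card S))
    = (\<Sum>t\<in>S. lagrangian \<gamma> D \<beta> P0 \<mu> r g \<tau> w (l t)) / real (card S)"
proof -
  define A where "A = mixed_value \<gamma> D \<beta> P0 \<mu> r w"
  define c where "c = (\<lambda>i. mixed_value \<gamma> D \<beta> P0 \<mu> (g i) w - \<tau> i)"
  have card_pos: "real (card S) > 0"
    using assms by (simp add: card_gt_0_iff)
  have "(\<Sum>t\<in>S. A - (\<Sum>i\<in>UNIV. l t i * c i))
      = real (card S) * A - (\<Sum>i\<in>UNIV. (\<Sum>t\<in>S. l t i) * c i)"
    by (simp add: sum_subtractf sum_distrib_right sum.swap[of _ S UNIV])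
  then have "(\<Sum>t\<in>S. A - (\<Sum>i\<in>UNIV. l t i * c i)) / real (card S)
      = A - (\<Sum>i\<in>UNIV. (\<Sum>t\<in>S. l t i) / real (card S) * c i)"
    using card_pos by (simp add: diff_divide_distrib times_divide_eq_left sum_divide_distrib[symmetric])
  then show ?thesis
    unfolding lagrangian_def A_def c_def by simp
qed

lemma sum_card_fibres:
  fixes f :: "'b \<Rightarrow> 'a::finite" and h :: "'a \<Rightarrow> real"
  assumes "finite S"
  shows "(\<Sum>p\<in>UNIV. real (card {t\<in>S. f t = p}) * h p) = (\<Sum>t\<in>S. h (f t))"
proof -
  have "(\<Sum>p\<in>UNIV. real (card {t\<in>S. f t = p}) * h p) = (\<Sum>p\<in>UNIV. \<Sum>t\<in>{t\<in>S. f t = p}. h (f t))"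
    by (intro sum.cong) auto
  also have "\<dots> = (\<Sum>t\<in>S. h (f t))"
    using assms by (intro sum.group) auto
  finally show ?thesis .
qed

lemma lagrangian_empirical_mixture:
  fixes \<pi> :: "'b \<Rightarrow> ('s::finite \<Rightarrow> 'a::finite)"
  assumes "finite S" "S \<noteq> {}"
  shows "lagrangian \<gamma> D \<beta> P0 \<mu> r g \<tau> (\<lambda>p. real (card {t\<in>S. \<pi> t = p}) / real (card S)) l
    = (\<Sum>t\<in>S. lagrangian \<gamma> D \<beta> P0 \<mu> r g \<tau> (det_mix (\<pi> t)) l) / real (card S)"
proof -
  have average: "(\<Sum>p\<in>UNIV. real (card {t\<in>S. \<pi> t = p}) / real (card S) * h p)
      = (\<Sum>t\<in>S. h (\<pi> t)) / real (card S)" for h :: "('s \<Rightarrow> 'a) \<Rightarrow> real"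
    by (simp only: times_divide_eq_left sum_divide_distrib[symmetric] sum_card_fibres[OF assms(1)])
  have "(\<Sum>p\<in>UNIV. real (card {t\<in>S. \<pi> t = p}) / real (card S)) = 1"
    using average[of "\<lambda>_. 1"] assms by simp
  then show ?thesis
    by (simp only: lagrangian_convex_combination average)
qed

lemma no_regret_duality_gap:
  fixes L :: "'w \<Rightarrow> 'l \<Rightarrow> real" and x :: "nat \<Rightarrow> 'w" and y :: "nat \<Rightarrow> 'l"
  assumes "T \<ge> 1"
    and avg_x: "\<And>l. l \<in> \<Lambda> \<Longrightarrow> L x_avg l = (\<Sum>t=1..T. L (x t) l) / real T"
    and avg_y: "\<And>w. w \<in> W \<Longrightarrow> L w y_avg = (\<Sum>t=1..T. L w (y t)) / real T"
    and best_response: "\<And>t w. t \<in> {1..T} \<Longrightarrow> w \<in> W \<Longrightarrow> L w (y t) \<le> L (x t) (y t)"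
    and regret: "\<And>l. l \<in> \<Lambda> \<Longrightarrow> (\<Sum>t=1..T. L (x t) (y t)) - \<rho> \<le> (\<Sum>t=1..T. L (x t) l)"
  shows "(SUP w\<in>W. ereal (L w y_avg)) - (INF l\<in>\<Lambda>. ereal (L x_avg l)) \<le> ereal (\<rho> / real T)"
proof -
  define a where "a = (\<Sum>t=1..T. L (x t) (y t)) / real T"
  have T_pos: "real T > 0"
    using \<open>T \<ge> 1\<close> by simp
  have "(SUP w\<in>W. ereal (L w y_avg)) \<le> ereal a"
  proof (rule SUP_least)
    fix w assume "w \<in> W"
    then have "(\<Sum>t=1..T. L w (y t)) \<le> (\<Sum>t=1..T. L (x t) (y t))"
      by (intro sum_mono best_response)
    then show "ereal (L w y_avg) \<le> ereal a"
      unfolding avg_y[OF \<open>w \<in> W\<close>] a_def using T_pos by (simp add: divide_right_mono)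
  qed
  moreover have "ereal (a - \<rho> / real T) \<le> (INF l\<in>\<Lambda>. ereal (L x_avg l))"
  proof (rule INF_greatest)
    fix l assume "l \<in> \<Lambda>"
    then have "((\<Sum>t=1..T. L (x t) (y t)) - \<rho>) / real T \<le> (\<Sum>t=1..T. L (x t) l) / real T"
      using T_pos by (intro divide_right_mono regret) auto
    then show "ereal (a - \<rho> / real T) \<le> ereal (L x_avg l)"
      unfolding avg_x[OF \<open>l \<in> \<Lambda>\<close>] a_def by (simp add: diff_divide_distrib)
  qed
  ultimately have "(SUP w\<in>W. ereal (L w y_avg)) - (INF l\<in>\<Lambda>. ereal (L x_avg l))
      \<le> ereal a - ereal (a - \<rho> / real T)"
    by (rule ereal_minus_mono)
  then show ?thesis
    by simp
qed

lemma smallo_linear_ratio_less: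
  fixes R :: "nat \<Rightarrow> real"
  assumes "R \<in> o(\<lambda>T. real T)" "0 < \<omega>"
  shows "\<exists>T\<ge>1. R T / real T < \<omega>"
proof -
  have "\<forall>\<^sub>F T in at_top. R T / real T < \<omega>"
    using order_tendstoD(2)[OF smalloD_tendsto[OF assms(1)] assms(2)] .
  then have "\<forall>\<^sub>F T in at_top. T \<ge> 1 \<and> R T / real T < \<omega>"
    by (intro eventually_conj eventually_ge_at_top)
  then show ?thesis
    by (simp add: eventually_at_top_linorder) blast
qed

theorem proposition2:
  fixes \<gamma> :: real
    and \<mu> :: "'s::finite \<Rightarrow> real"
    and D :: "('s \<Rightarrow> real) \<Rightarrow> ('s \<Rightarrow> real) \<Rightarrow> real"
    and \<beta> :: "'s \<Rightarrow> 'a::finite \<Rightarrow> real"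
    and P0 :: "'s \<Rightarrow> 'a \<Rightarrow> 's \<Rightarrow> real"
    and r :: "'s \<Rightarrow> 'a \<Rightarrow> real" and Rbar :: real
    and g :: "'i::finite \<Rightarrow> 's \<Rightarrow> 'a \<Rightarrow> real" and \<tau> :: "'i \<Rightarrow> real"
    and \<omega> :: real
    and alg :: "('s \<Rightarrow> 'a) list \<Rightarrow> ('i \<Rightarrow> real)"
    and \<pi> :: "nat \<Rightarrow> ('s \<Rightarrow> 'a)"
    and lam :: "nat \<Rightarrow> ('i \<Rightarrow> real)"
    and R :: "nat \<Rightarrow> real"
    and L :: "(('s \<Rightarrow> 'a) \<Rightarrow> real) \<Rightarrow> ('i \<Rightarrow> real) \<Rightarrow> real"
    and hat_pi :: "nat \<Rightarrow> (('s \<Rightarrow> 'a) \<Rightarrow> real)"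
    and hat_lam :: "nat \<Rightarrow> ('i \<Rightarrow> real)"
    and gap :: "nat \<Rightarrow> ereal"
  defines "L \<equiv> lagrangian \<gamma> D \<beta> P0 \<mu> r g \<tau>"
    and "hat_pi \<equiv> (\<lambda>T p. real (card {t\<in>{1..T}. \<pi> t = p}) / real T)"
    and "hat_lam \<equiv> (\<lambda>T i. (\<Sum>t=1..T. lam t i) / real T)"
    and "gap \<equiv> (\<lambda>T. (SUP w\<in>{w. mixed_policy w}. ereal (L w (hat_lam T)))
                    - (INF l\<in>{l. \<forall>i. 0 \<le> l i}. ereal (L (hat_pi T) l)))"
  assumes gamma: "0 \<le> \<gamma>" "\<gamma> < 1"
    and mu: "prob_vec \<mu>"
    and nominal: "\<forall>s a. prob_vec (P0 s a)"
    and radius: "\<forall>s a. 0 \<le> \<beta> s a"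
    and reward: "\<forall>s a. 0 \<le> r s a \<and> r s a \<le> Rbar"
    and constr: "\<forall>i s a. 0 \<le> g i s a \<and> g i s a \<le> \<tau> i"
    and omega: "0 < \<omega>"
    and lam1: "\<forall>i. 0 \<le> lam 1 i"
    and alg_nonneg: "\<forall>h i. 0 \<le> alg h i"
    and alg_step: "\<forall>t\<ge>1. lam (Suc t) = alg (map \<pi> [1..<Suc t])"
    and best_resp: "\<forall>t\<ge>1. \<forall>w. mixed_policy w \<longrightarrow> L w (lam t) \<le> L (det_mix (\<pi> t)) (lam t)"
    and no_regret: "\<forall>T\<ge>1. \<forall>l. (\<forall>i. 0 \<le> l i) \<longrightarrow>
        (\<Sum>t=1..T. - L (det_mix (\<pi> t)) (lam t)) \<ge> (\<Sum>t=1..T. - L (det_mix (\<pi> t)) l) - R T"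
    and sublinear: "R \<in> o(\<lambda>T. real T)"
  shows "(\<forall>T\<ge>1. gap T \<le> ereal (R T / real T)) \<and> (\<exists>T\<ge>1. gap T < ereal \<omega>)"
proof -
  have gap_bound: "gap T \<le> ereal (R T / real T)" if "T \<ge> 1" for T
    unfolding gap_def
  proof (rule no_regret_duality_gap[where x = "\<lambda>t. det_mix (\<pi> t)"])
    show "L (hat_pi T) l = (\<Sum>t=1..T. L (det_mix (\<pi> t)) l) / real T" for l
      using lagrangian_empirical_mixture[of "{1..T}" \<gamma> D \<beta> P0 \<mu> r g \<tau> \<pi> l] that
      by (simp add: L_def hat_pi_def)
    show "L w (hat_lam T) = (\<Sum>t=1..T. L w (lam t)) / real T" for w
      using lagrangian_average_multipliers[of "{1..T}" \<gamma> D \<beta> P0 \<mu> r g \<tau> w lam] that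
      by (simp add: L_def hat_lam_def)
    show "(\<Sum>t=1..T. L (det_mix (\<pi> t)) (lam t)) - R T \<le> (\<Sum>t=1..T. L (det_mix (\<pi> t)) l)"
      if "l \<in> {l. \<forall>i. 0 \<le> l i}" for l
    proof -
      have "(\<Sum>t=1..T. - L (det_mix (\<pi> t)) l) - R T \<le> (\<Sum>t=1..T. - L (det_mix (\<pi> t)) (lam t))"
        using no_regret \<open>T \<ge> 1\<close> that by blast
      then show ?thesis
        by (simp add: sum_negf)
    qed
  qed (use that best_resp in auto)
  moreover obtain T where "T \<ge> 1" "R T / real T < \<omega>"
    using smallo_linear_ratio_less[OF sublinear omega] by blast
  ultimately show ?thesis
    using order_le_less_trans by fastforce
qed

end
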